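(* Let $(V,\mathscr{B},\mu)$ be a measure space with $\mu$ positive and $\sigma$-finite, $\mathscr{B}_{fin}=\{A\in\mathscr{B}:\mu(A)<\infty\}$, and $K^{(\mu)}(A,B)=\mu(A\cap B)$ for $A,B\in\mathscr{B}_{fin}$. Let $\mathscr{H}(K^{(\mu)})$ be the reproducing kernel Hilbert space of $K^{(\mu)}$ (a Hilbert space of real functions on $\mathscr{B}_{fin}$). Then a function $F:\mathscr{B}_{fin}\to\mathbb{R}$ belongs to $\mathscr{H}(K^{(\mu)})$ if and only if there exists $\varphi\in L^2(\mu)$ with $F(A)=\int_A\varphi\,d\mu$ for all $A\in\mathscr{B}_{fin}$ (i.e. $F$ is a signed measure, absolutely continuous with respect to $\mu$, with Radon–Nikodym derivative $dF/d\mu=\varphi\in L^2(\mu)$). In that case $\varphi$ is unique $\mu$-a.e. and $$\|F\|_{\mathscr{H}(K^{(\mu)})}=\Big\|\frac{dF}{d\mu}\Big\|_{L^2(\mu)}.$$ Moreover every $F\in\mathscr{H}(K^{(\mu)})$ is countably additive: if $A=\bigcup_{i=1}^\infty A_i$ with $A,A_i\in\mathscr{B}_{fin}$ pairwise disjoint, then $F(A)=\sum_{i=1}^\infty F(A_i)$; and $\mu(A)=0$ implies $F(A)=0$.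
   Context: For a p.d. kernel $K$ on a set $S$, $\mathscr{H}(K)$ denotes the unique Hilbert space of functions on $S$ such that $K(\cdot,s)\in\mathscr{H}(K)$ for all $s$ and $F(s)=\langle F,K(\cdot,s)\rangle_{\mathscr{H}(K)}$ for all $F\in\mathscr{H}(K)$, $s\in S$ (reproducing kernel Hilbert space, RKHS). All functions are real valued. *)

theory Defs
  imports "HOL-Analysis.Analysis"
begin

text \<open>Reproducing kernel Hilbert space of a kernel K on a set S, following the paper:
  a Hilbert space H of real functions on S (represented as functions that vanish outside S),
  with inner product ip, such that K(.,s) is in H for s in S and
  F(s) = <F, K(.,s)> for F in H and s in S.\<close>

definition is_rkhs ::
  "'s set \<Rightarrow> ('s \<Rightarrow> 's \<Rightarrow> real) \<Rightarrow> ('s \<Rightarrow> real) set \<Rightarrow> (('s \<Rightarrow> real) \<Rightarrow> ('s \<Rightarrow> real) \<Rightarrow> real) \<Rightarrow> bool"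
where
  "is_rkhs S K H ip \<longleftrightarrow>
     \<comment> \<open>H is a linear space of functions on S\<close>
     H \<subseteq> extensional S \<and>
     (\<lambda>x. 0) \<in> H \<and>
     (\<forall>f\<in>H. \<forall>g\<in>H. (\<lambda>x. f x + g x) \<in> H) \<and>
     (\<forall>c. \<forall>f\<in>H. (\<lambda>x. c * f x) \<in> H) \<and>
     \<comment> \<open>ip is an inner product on H\<close>
     (\<forall>f\<in>H. \<forall>g\<in>H. ip f g = ip g f) \<and>
     (\<forall>f\<in>H. \<forall>g\<in>H. \<forall>h\<in>H. ip (\<lambda>x. f x + g x) h = ip f h + ip g h) \<and>
     (\<forall>c. \<forall>f\<in>H. \<forall>g\<in>H. ip (\<lambda>x. c * f x) g = c * ip f g) \<and>
     (\<forall>f\<in>H. 0 \<le> ip f f) \<and>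
     (\<forall>f\<in>H. ip f f = 0 \<longrightarrow> f = (\<lambda>x. 0)) \<and>
     \<comment> \<open>completeness\<close>
     (\<forall>f :: nat \<Rightarrow> 's \<Rightarrow> real. (\<forall>n. f n \<in> H) \<and>
        (\<forall>e>0. \<exists>N. \<forall>m\<ge>N. \<forall>n\<ge>N. ip (\<lambda>x. f m x - f n x) (\<lambda>x. f m x - f n x) < e)
        \<longrightarrow> (\<exists>g\<in>H. (\<lambda>n. ip (\<lambda>x. f n x - g x) (\<lambda>x. f n x - g x)) \<longlonglongrightarrow> 0)) \<and>
     \<comment> \<open>kernel sections belong to H and the reproducing property\<close>
     (\<forall>s\<in>S. (\<lambda>t. if t \<in> S then K t s else 0) \<in> H) \<and>
     (\<forall>F\<in>H. \<forall>s\<in>S. F s = ip F (\<lambda>t. if t \<in> S then K t s else 0))"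

definition fin_sets :: "'a measure \<Rightarrow> 'a set set" where
  "fin_sets M = {A \<in> sets M. emeasure M A < \<infinity>}"

definition mu_kernel :: "'a measure \<Rightarrow> 'a set \<Rightarrow> 'a set \<Rightarrow> real" where
  "mu_kernel M A B = measure M (A \<inter> B)"

definition L2_density :: "'a measure \<Rightarrow> ('a set \<Rightarrow> real) \<Rightarrow> ('a \<Rightarrow> real) \<Rightarrow> bool" where
  "L2_density M F \<phi> \<longleftrightarrow> \<phi> \<in> borel_measurable M \<and> integrable M (\<lambda>x. (\<phi> x)\<^sup>2) \<and>
     (\<forall>A\<in>fin_sets M. F A = (LINT x:A|M. \<phi> x))"

end

theory Submission
  imports Defs
begin

text \<open>Extending \<open>K(\<cdot>, B) \<mapsto> 1\<^sub>B\<close> linearly identifies kernel combinations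
  \<open>\<Sum> c\<^sub>i K(\<cdot>, B\<^sub>i)\<close> isometrically with step functions \<open>\<Sum> c\<^sub>i 1\<^bsub>B\<^sub>i\<^esub>\<close>, because
  \<open>\<langle>K(\<cdot>, A), K(\<cdot>, B)\<rangle> = \<mu>(A \<inter> B) = \<langle>1\<^sub>A, 1\<^sub>B\<rangle>\<close>; moreover the value of a combination
  at \<open>A\<close> is the integral over \<open>A\<close> of the step function. Step functions are dense in
  \<open>L\<^sup>2(\<mu>)\<close>, so completeness of \<open>\<H>(K)\<close> turns every \<open>\<phi> \<in> L\<^sup>2(\<mu>)\<close> into the element
  \<open>A \<mapsto> \<integral>\<^sub>A \<phi>\<close>, of the same norm. Conversely, for \<open>F \<in> \<H>(K)\<close> the functional
  \<open>\<Sum> c\<^sub>i 1\<^bsub>B\<^sub>i\<^esub> \<mapsto> \<Sum> c\<^sub>i F(B\<^sub>i)\<close> is bounded on step functions by Cauchy-Schwarz in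
  \<open>\<H>(K)\<close>; a minimising sequence of the energy \<open>\<parallel>\<psi>\<parallel>\<^sup>2 - 2 F(\<psi>)\<close> over step functions is
  Cauchy in \<open>L\<^sup>2\<close>, and its limit \<open>\<phi>\<close> (completeness of \<open>L\<^sup>2\<close> is derived from \<open>L\<^sup>1\<close> via a
  positive square-integrable weight, which exists as \<open>\<mu>\<close> is \<open>\<sigma>\<close>-finite) satisfies
  \<open>F(B) = \<integral>\<^sub>B \<phi>\<close>. Uniqueness, countable additivity and absolute continuity are then
  properties of set integrals.\<close>

lemma square_le_of_quadratic_nonneg:
  fixes a b c :: real
  assumes "\<And>t. 0 \<le> a - 2 * t * b + t\<^sup>2 * c" "0 \<le> c"
  shows "b\<^sup>2 \<le> a * c"
proof (cases "c = 0")
  case True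
  have "b = 0"
  proof (rule ccontr)
    assume "b \<noteq> 0"
    have "0 \<le> a - 2 * ((a + 1) / (2 * b)) * b" using assms(1)[of "(a + 1) / (2 * b)"] True by simp
    also have "\<dots> = -1" using \<open>b \<noteq> 0\<close> by (simp add: field_simps)
    finally show False by simp
  qed
  then show ?thesis using True by simp
next
  case False
  then have c: "c > 0" using assms(2) by simp
  have "0 \<le> a - 2 * (b / c) * b + (b / c)\<^sup>2 * c" by (rule assms(1))
  also have "\<dots> = a - b\<^sup>2 / c" using c by (simp add: field_simps power2_eq_square)
  finally show ?thesis using c by (simp add: field_simps mult.commute)
qed

lemma tendsto_of_square_le_mult:
  fixes x :: "nat \<Rightarrow> real"
  assumes "d \<longlonglongrightarrow> 0" and "\<And>n. (x n - y)\<^sup>2 \<le> C * d n"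
  shows "x \<longlonglongrightarrow> y"
proof (rule LIM_zero_cancel, rule Lim_null_comparison)
  show "\<forall>\<^sub>F n in sequentially. norm (x n - y) \<le> sqrt (C * d n)"
    using real_sqrt_le_mono[OF assms(2)] by simp
  have "(\<lambda>n. sqrt (C * d n)) \<longlonglongrightarrow> sqrt (C * 0)" by (intro tendsto_intros assms(1))
  then show "(\<lambda>n. sqrt (C * d n)) \<longlonglongrightarrow> 0" by simp
qed

definition square_integrable :: "'a measure \<Rightarrow> ('a \<Rightarrow> real) \<Rightarrow> bool" where
  "square_integrable M f \<longleftrightarrow> f \<in> borel_measurable M \<and> integrable M (\<lambda>x. (f x)\<^sup>2)"

lemma L2_density_iff:
  "L2_density M F \<phi> \<longleftrightarrow> square_integrable M \<phi> \<and> (\<forall>A\<in>fin_sets M. F A = (LINT x:A|M. \<phi> x))"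
  by (simp add: L2_density_def square_integrable_def)

lemma integrable_mult_square_integrable:
  assumes "square_integrable M f" "square_integrable M g"
  shows "integrable M (\<lambda>x. f x * g x)"
proof (rule Bochner_Integration.integrable_bound)
  show "integrable M (\<lambda>x. (f x)\<^sup>2 + (g x)\<^sup>2)" "(\<lambda>x. f x * g x) \<in> borel_measurable M"
    using assms unfolding square_integrable_def by auto
  have "\<bar>f x * g x\<bar> \<le> (f x)\<^sup>2 + (g x)\<^sup>2" for x
    using sum_squares_bound[of "\<bar>f x\<bar>" "\<bar>g x\<bar>"]
      mult_nonneg_nonneg[OF abs_ge_zero abs_ge_zero, of "f x" "g x"]
    by (simp only: abs_mult power2_abs mult.assoc)
  then show "AE x in M. norm (f x * g x) \<le> norm ((f x)\<^sup>2 + (g x)\<^sup>2)"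
    by (intro AE_I2) simp
qed

lemma square_integrable_add:
  assumes "square_integrable M f" "square_integrable M g"
  shows "square_integrable M (\<lambda>x. f x + g x)"
proof -
  have "integrable M (\<lambda>x. (f x)\<^sup>2 + (g x)\<^sup>2 + 2 * (f x * g x))"
    using assms integrable_mult_square_integrable[OF assms] unfolding square_integrable_def by auto
  then show ?thesis
    using assms unfolding square_integrable_def power2_sum by (simp add: mult.assoc borel_measurable_add)
qed

lemma square_integrable_cmult: "square_integrable M f \<Longrightarrow> square_integrable M (\<lambda>x. c * f x)"
  unfolding square_integrable_def power_mult_distrib by auto

lemma square_integrable_diff:
  "square_integrable M f \<Longrightarrow> square_integrable M g \<Longrightarrow> square_integrable M (\<lambda>x. f x - g x)"
  using square_integrable_add[of M f "\<lambda>x. (-1) * g x"] square_integrable_cmult[of M g "-1"] by simp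

lemma square_integrable_abs: "square_integrable M f \<Longrightarrow> square_integrable M (\<lambda>x. \<bar>f x\<bar>)"
  unfolding square_integrable_def by auto

lemma indicator_power2 [simp]: "(indicator A x :: real)\<^sup>2 = indicator A x"
  by (simp add: indicator_def)

lemma square_integrable_indicator: "A \<in> fin_sets M \<Longrightarrow> square_integrable M (indicator A)"
  unfolding square_integrable_def fin_sets_def
  by (simp add: integrable_indicator_iff borel_measurable_indicator)

lemma fin_sets_Int: "A \<in> fin_sets M \<Longrightarrow> B \<in> sets M \<Longrightarrow> A \<inter> B \<in> fin_sets M"
  unfolding fin_sets_def by (auto intro: le_less_trans[OF emeasure_mono])

lemma set_integrable_square_integrable:
  "square_integrable M f \<Longrightarrow> A \<in> fin_sets M \<Longrightarrow> set_integrable M A f"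
  unfolding set_integrable_def
  using integrable_mult_square_integrable[OF square_integrable_indicator] by simp

lemma Cauchy_Schwarz_integral:
  assumes f: "square_integrable M f" and g: "square_integrable M g"
  shows "(\<integral>x. f x * g x \<partial>M)\<^sup>2 \<le> (\<integral>x. (f x)\<^sup>2 \<partial>M) * (\<integral>x. (g x)\<^sup>2 \<partial>M)"
proof (rule square_le_of_quadratic_nonneg)
  fix t :: real
  have int: "integrable M (\<lambda>x. (f x)\<^sup>2)" "integrable M (\<lambda>x. (g x)\<^sup>2)" "integrable M (\<lambda>x. f x * g x)"
    using f g integrable_mult_square_integrable[OF f g] by (auto simp: square_integrable_def)
  have "0 \<le> (\<integral>x. (f x - t * g x)\<^sup>2 \<partial>M)" by simp
  also have "\<dots> = (\<integral>x. (f x)\<^sup>2 - 2 * t * (f x * g x) + t\<^sup>2 * (g x)\<^sup>2 \<partial>M)"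
    by (rule Bochner_Integration.integral_cong) (simp_all add: power2_eq_square algebra_simps)
  also have "\<dots> = (\<integral>x. (f x)\<^sup>2 \<partial>M) - 2 * t * (\<integral>x. f x * g x \<partial>M) + t\<^sup>2 * (\<integral>x. (g x)\<^sup>2 \<partial>M)"
    using int by simp
  finally show "0 \<le> (\<integral>x. (f x)\<^sup>2 \<partial>M) - 2 * t * (\<integral>x. f x * g x \<partial>M) + t\<^sup>2 * (\<integral>x. (g x)\<^sup>2 \<partial>M)" .
qed simp

section \<open>Completeness of \<open>L\<^sup>2\<close>\<close>

lemma (in sigma_finite_measure) Ex_positive_square_integrable:
  obtains w where "square_integrable M w" "\<And>x. x \<in> space M \<Longrightarrow> 0 < w x" "\<And>x. 0 \<le> w x"
proof -
  obtain h where h: "h \<in> borel_measurable M" "integral\<^sup>N M h \<noteq> \<infinity>"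
    "\<And>x. x \<in> space M \<Longrightarrow> 0 < h x \<and> h x < \<infinity>"
    using Ex_finite_integrable_function by blast
  define w where "w x = sqrt (enn2real (h x))" for x
  have "(\<integral>\<^sup>+x. ennreal (enn2real (h x)) \<partial>M) = integral\<^sup>N M h"
    using h(3) by (intro nn_integral_cong) (auto simp: less_top ennreal_enn2real_if)
  then have "integrable M (\<lambda>x. enn2real (h x))"
    using h by (intro integrableI_nonneg) (auto simp: less_top)
  moreover have "w \<in> borel_measurable M" unfolding w_def using h(1) by measurable
  ultimately have "square_integrable M w" by (simp add: square_integrable_def w_def)
  moreover have "0 < w x" if "x \<in> space M" for x
    using h(3)[OF that] unfolding w_def by (auto simp: enn2real_positive_iff less_top)
  moreover have "0 \<le> w x" for x unfolding w_def by simp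
  ultimately show ?thesis using that by blast
qed

lemma weighted_L1_cauchy_of_L2_cauchy:
  fixes f :: "nat \<Rightarrow> 'a \<Rightarrow> real"
  assumes f: "\<And>n. square_integrable M (f n)" and w: "square_integrable M w" "\<And>x. 0 \<le> w x"
    and cauchy: "\<And>e. e > 0 \<Longrightarrow> \<exists>N. \<forall>m\<ge>N. \<forall>n\<ge>N. (\<integral>x. (f m x - f n x)\<^sup>2 \<partial>M) < e"
    and e: "e > 0"
  shows "\<exists>N. \<forall>i\<ge>N. \<forall>j\<ge>N. (LINT x|M. norm (f i x * w x - f j x * w x)) < e"
proof -
  define W where "W = (\<integral>x. (w x)\<^sup>2 \<partial>M)"
  have W: "0 \<le> W" unfolding W_def by simp
  obtain N where N: "\<And>m n. m \<ge> N \<Longrightarrow> n \<ge> N \<Longrightarrow> (\<integral>x. (f m x - f n x)\<^sup>2 \<partial>M) < e\<^sup>2 / (W + 1)"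
    using cauchy[of "e\<^sup>2 / (W + 1)"] e W by force
  have "(LINT x|M. norm (f i x * w x - f j x * w x)) < e" if "i \<ge> N" "j \<ge> N" for i j
  proof -
    have "(LINT x|M. norm (f i x * w x - f j x * w x)) = (\<integral>x. \<bar>f i x - f j x\<bar> * w x \<partial>M)"
      using w(2) by (intro Bochner_Integration.integral_cong)
        (auto simp: abs_mult left_diff_distrib[symmetric])
    also have "\<dots> \<le> sqrt ((\<integral>x. (f i x - f j x)\<^sup>2 \<partial>M) * W)"
      using Cauchy_Schwarz_integral[OF square_integrable_abs[OF square_integrable_diff[OF f f]] w(1)]
      unfolding W_def by (intro real_le_rsqrt) simp
    also have "\<dots> < sqrt (e\<^sup>2)"
    proof (rule real_sqrt_less_mono)
      have "(\<integral>x. (f i x - f j x)\<^sup>2 \<partial>M) * W \<le> e\<^sup>2 / (W + 1) * W"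
        using N[OF that] W by (intro mult_right_mono) auto
      also have "\<dots> < e\<^sup>2" using W e by (simp add: field_simps)
      finally show "(\<integral>x. (f i x - f j x)\<^sup>2 \<partial>M) * W < e\<^sup>2" .
    qed
    finally show ?thesis using e by simp
  qed
  then show ?thesis by blast
qed

lemma (in sigma_finite_measure) L2_cauchy_AE_convergent_subseq:
  fixes f :: "nat \<Rightarrow> 'a \<Rightarrow> real"
  assumes f: "\<And>n. square_integrable M (f n)"
    and cauchy: "\<And>e. e > 0 \<Longrightarrow> \<exists>N. \<forall>m\<ge>N. \<forall>n\<ge>N. (\<integral>x. (f m x - f n x)\<^sup>2 \<partial>M) < e"
  obtains r where "strict_mono r" "AE x in M. convergent (\<lambda>i. f (r i) x)"
proof -
  \<comment> \<open>After multiplying by a positive weight \<open>w \<in> L\<^sup>2\<close> the sequence is Cauchy in \<open>L\<^sup>1\<close>;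
    dividing by \<open>w\<close> again keeps pointwise convergence.\<close>
  obtain w where w: "square_integrable M w" "\<And>x. x \<in> space M \<Longrightarrow> 0 < w x" "\<And>x. 0 \<le> w x"
    using Ex_positive_square_integrable by blast
  obtain r where r: "strict_mono r" "AE x in M. Cauchy (\<lambda>i. f (r i) x * w x)"
    using cauchy_L1_AE_cauchy_subseq[of M "\<lambda>n x. f n x * w x"] integrable_mult_square_integrable[OF f w(1)]
      weighted_L1_cauchy_of_L2_cauchy[OF f w(1,3) cauchy] by blast
  have "AE x in M. convergent (\<lambda>i. f (r i) x)"
    using r(2)
  proof (rule AE_mp, intro AE_I2 impI)
    fix x assume "x \<in> space M" and "Cauchy (\<lambda>i. f (r i) x * w x)"
    then have "convergent (\<lambda>i. inverse (w x) * (f (r i) x * w x))"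
      using w(2)[OF \<open>x \<in> space M\<close>] by (simp add: Cauchy_convergent_iff convergent_mult_const_iff)
    moreover have "(\<lambda>i. inverse (w x) * (f (r i) x * w x)) = (\<lambda>i. f (r i) x)"
      using w(2)[OF \<open>x \<in> space M\<close>] by (simp add: fun_eq_iff)
    ultimately show "convergent (\<lambda>i. f (r i) x)" by simp
  qed
  with r(1) show ?thesis using that by blast
qed

lemma square_integral_le_of_AE_tendsto:
  fixes g :: "nat \<Rightarrow> 'a \<Rightarrow> real"
  assumes g: "\<And>i. g i \<in> borel_measurable M" and h: "h \<in> borel_measurable M"
    and lim: "AE x in M. (\<lambda>i. g i x) \<longlonglongrightarrow> h x"
    and bound: "eventually (\<lambda>i. integrable M (\<lambda>x. (g i x)\<^sup>2) \<and> (\<integral>x. (g i x)\<^sup>2 \<partial>M) \<le> e) sequentially"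
  shows "integrable M (\<lambda>x. (h x)\<^sup>2) \<and> (\<integral>x. (h x)\<^sup>2 \<partial>M) \<le> e"
proof -
  have "(\<integral>\<^sup>+x. ennreal ((h x)\<^sup>2) \<partial>M) = (\<integral>\<^sup>+x. liminf (\<lambda>i. ennreal ((g i x)\<^sup>2)) \<partial>M)"
    using lim
  proof (intro nn_integral_cong_AE, eventually_elim)
    case (elim x)
    then have "(\<lambda>i. ennreal ((g i x)\<^sup>2)) \<longlonglongrightarrow> ennreal ((h x)\<^sup>2)"
      by (intro tendsto_ennrealI tendsto_intros)
    from lim_imp_Liminf[OF trivial_limit_sequentially this] show ?case by simp
  qed
  also have "\<dots> \<le> liminf (\<lambda>i. \<integral>\<^sup>+x. ennreal ((g i x)\<^sup>2) \<partial>M)"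
    using g by (intro nn_integral_liminf) measurable
  also have "\<dots> \<le> ennreal e"
  proof -
    have "eventually (\<lambda>i. (\<integral>\<^sup>+x. ennreal ((g i x)\<^sup>2) \<partial>M) \<le> ennreal e) sequentially"
      using bound by eventually_elim (simp add: nn_integral_eq_integral ennreal_leI)
    then have "limsup (\<lambda>i. \<integral>\<^sup>+x. ennreal ((g i x)\<^sup>2) \<partial>M) \<le> ennreal e"
      by (rule Limsup_bounded)
    then show ?thesis using Liminf_le_Limsup[of sequentially] order_trans by fastforce
  qed
  finally have le: "(\<integral>\<^sup>+x. ennreal ((h x)\<^sup>2) \<partial>M) \<le> ennreal e" .
  then have int: "integrable M (\<lambda>x. (h x)\<^sup>2)"
    using h le_less_trans[OF le ennreal_less_top] by (intro integrableI_nonneg) auto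
  obtain N where "(\<integral>x. (g N x)\<^sup>2 \<partial>M) \<le> e"
    using bound by (auto simp: eventually_sequentially)
  moreover have "0 \<le> (\<integral>x. (g N x)\<^sup>2 \<partial>M)" by simp
  ultimately have "0 \<le> e" by linarith
  with le int have "(\<integral>x. (h x)\<^sup>2 \<partial>M) \<le> e"
    by (simp add: nn_integral_eq_integral ennreal_le_iff)
  with int show ?thesis by simp
qed

lemma L2_tendsto_of_AE_subseq:
  fixes f :: "nat \<Rightarrow> 'a \<Rightarrow> real"
  assumes f: "\<And>n. square_integrable M (f n)"
    and cauchy: "\<And>e. e > 0 \<Longrightarrow> \<exists>N. \<forall>m\<ge>N. \<forall>n\<ge>N. (\<integral>x. (f m x - f n x)\<^sup>2 \<partial>M) < e"
    and r: "strict_mono r" and \<phi>m: "\<phi> \<in> borel_measurable M"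
    and lim: "AE x in M. (\<lambda>i. f (r i) x) \<longlonglongrightarrow> \<phi> x"
  shows "square_integrable M \<phi>" "(\<lambda>n. \<integral>x. (f n x - \<phi> x)\<^sup>2 \<partial>M) \<longlonglongrightarrow> 0"
proof -
  have fm: "f n \<in> borel_measurable M" for n using f unfolding square_integrable_def by simp
  have close: "integrable M (\<lambda>x. (f n x - \<phi> x)\<^sup>2) \<and> (\<integral>x. (f n x - \<phi> x)\<^sup>2 \<partial>M) \<le> e"
    if N: "\<forall>m\<ge>N. \<forall>n\<ge>N. (\<integral>x. (f m x - f n x)\<^sup>2 \<partial>M) < e" and n: "n \<ge> N" for n N e
  proof (rule square_integral_le_of_AE_tendsto[where g="\<lambda>i x. f n x - f (r i) x"])
    show "AE x in M. (\<lambda>i. f n x - f (r i) x) \<longlonglongrightarrow> f n x - \<phi> x"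
      using lim by eventually_elim (intro tendsto_intros)
    show "eventually (\<lambda>i. integrable M (\<lambda>x. (f n x - f (r i) x)\<^sup>2) \<and>
        (\<integral>x. (f n x - f (r i) x)\<^sup>2 \<partial>M) \<le> e) sequentially"
    proof (rule eventually_sequentiallyI[of N])
      fix i assume "N \<le> i"
      then have "N \<le> r i" using seq_suble[OF r, of i] by simp
      then show "integrable M (\<lambda>x. (f n x - f (r i) x)\<^sup>2) \<and> (\<integral>x. (f n x - f (r i) x)\<^sup>2 \<partial>M) \<le> e"
        using N n square_integrable_diff[OF f f] unfolding square_integrable_def by fastforce
    qed
  qed (use fm \<phi>m in auto)
  obtain N1 where "\<forall>m\<ge>N1. \<forall>n\<ge>N1. (\<integral>x. (f m x - f n x)\<^sup>2 \<partial>M) < 1"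
    using cauchy[of 1] by auto
  from close[OF this order.refl] have "square_integrable M (\<lambda>x. f N1 x - \<phi> x)"
    using fm \<phi>m unfolding square_integrable_def by auto
  from square_integrable_diff[OF f[of N1] this] show "square_integrable M \<phi>" by simp
  show "(\<lambda>n. \<integral>x. (f n x - \<phi> x)\<^sup>2 \<partial>M) \<longlonglongrightarrow> 0"
  proof (rule LIMSEQ_I)
    fix e :: real assume "e > 0"
    then obtain N where "\<forall>m\<ge>N. \<forall>n\<ge>N. (\<integral>x. (f m x - f n x)\<^sup>2 \<partial>M) < e / 2"
      using cauchy[of "e / 2"] by auto
    then have "(\<integral>x. (f n x - \<phi> x)\<^sup>2 \<partial>M) \<le> e / 2" if "n \<ge> N" for n
      using close that by blast
    moreover have "0 \<le> (\<integral>x. (f n x - \<phi> x)\<^sup>2 \<partial>M)" for n by simp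
    ultimately show "\<exists>N. \<forall>n\<ge>N. norm ((\<integral>x. (f n x - \<phi> x)\<^sup>2 \<partial>M) - 0) < e"
      using \<open>e > 0\<close> by (intro exI[of _ N]) force
  qed
qed

lemma (in sigma_finite_measure) L2_complete:
  fixes f :: "nat \<Rightarrow> 'a \<Rightarrow> real"
  assumes f: "\<And>n. square_integrable M (f n)"
    and cauchy: "\<And>e. e > 0 \<Longrightarrow> \<exists>N. \<forall>m\<ge>N. \<forall>n\<ge>N. (\<integral>x. (f m x - f n x)\<^sup>2 \<partial>M) < e"
  obtains \<phi> where "square_integrable M \<phi>" "(\<lambda>n. \<integral>x. (f n x - \<phi> x)\<^sup>2 \<partial>M) \<longlonglongrightarrow> 0"
proof -
  obtain r where r: "strict_mono r" "AE x in M. convergent (\<lambda>i. f (r i) x)"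
    using L2_cauchy_AE_convergent_subseq[OF f cauchy] by blast
  define \<phi> where "\<phi> x = lim (\<lambda>i. f (r i) x)" for x
  have "\<phi> \<in> borel_measurable M"
    unfolding \<phi>_def using f by (intro borel_measurable_lim_metric) (simp add: square_integrable_def)
  moreover have "AE x in M. (\<lambda>i. f (r i) x) \<longlonglongrightarrow> \<phi> x"
    using r(2) by eventually_elim (simp add: \<phi>_def convergent_LIMSEQ_iff)
  ultimately show ?thesis using that L2_tendsto_of_AE_subseq[OF f cauchy r(1)] by blast
qed

lemma set_integral_tendsto_of_L2_tendsto:
  assumes A: "A \<in> fin_sets M" and f: "\<And>n. square_integrable M (f n)" and g: "square_integrable M g"
    and lim: "(\<lambda>n. \<integral>x. (f n x - g x)\<^sup>2 \<partial>M) \<longlonglongrightarrow> 0"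
  shows "(\<lambda>n. LINT x:A|M. f n x) \<longlonglongrightarrow> (LINT x:A|M. g x)"
proof (rule tendsto_of_square_le_mult[OF lim])
  fix n
  have "(LINT x:A|M. f n x) - (LINT x:A|M. g x) = (\<integral>x. indicator A x * (f n x - g x) \<partial>M)"
    using integrable_mult_square_integrable[OF square_integrable_indicator[OF A] f]
      integrable_mult_square_integrable[OF square_integrable_indicator[OF A] g]
    by (simp add: set_lebesgue_integral_def right_diff_distrib)
  also have "\<dots>\<^sup>2 \<le> (\<integral>x. (indicator A x)\<^sup>2 \<partial>M) * (\<integral>x. (f n x - g x)\<^sup>2 \<partial>M)"
    by (rule Cauchy_Schwarz_integral[OF square_integrable_indicator[OF A] square_integrable_diff[OF f g]])
  also have "(\<integral>x. (indicator A x)\<^sup>2 \<partial>M) = measure M A"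
    using A unfolding fin_sets_def by simp
  finally show "((LINT x:A|M. f n x) - (LINT x:A|M. g x))\<^sup>2 \<le> measure M A * (\<integral>x. (f n x - g x)\<^sup>2 \<partial>M)" .
qed

lemma integral_square_tendsto_of_L2_tendsto:
  assumes f: "\<And>n. square_integrable M (f n)" and g: "square_integrable M g"
    and lim: "(\<lambda>n. \<integral>x. (f n x - g x)\<^sup>2 \<partial>M) \<longlonglongrightarrow> 0"
  shows "(\<lambda>n. \<integral>x. (f n x)\<^sup>2 \<partial>M) \<longlonglongrightarrow> (\<integral>x. (g x)\<^sup>2 \<partial>M)"
proof -
  let ?d = "\<lambda>n. \<integral>x. (f n x - g x)\<^sup>2 \<partial>M" and ?c = "\<lambda>n. \<integral>x. (f n x - g x) * g x \<partial>M"
  have "(\<integral>x. (f n x)\<^sup>2 \<partial>M) = (\<integral>x. (g x)\<^sup>2 \<partial>M) + ?d n + 2 * ?c n" for n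
  proof -
    have "(\<lambda>x. (f n x)\<^sup>2) = (\<lambda>x. (g x)\<^sup>2 + (f n x - g x)\<^sup>2 + 2 * ((f n x - g x) * g x))"
      by (simp add: fun_eq_iff power2_eq_square algebra_simps)
    moreover have "integrable M (\<lambda>x. (f n x - g x)\<^sup>2)" "integrable M (\<lambda>x. (g x)\<^sup>2)"
      "integrable M (\<lambda>x. (f n x - g x) * g x)"
      using g square_integrable_diff[OF f g]
        integrable_mult_square_integrable[OF square_integrable_diff[OF f g] g]
      by (auto simp: square_integrable_def)
    ultimately show ?thesis by simp
  qed
  moreover have "?c \<longlonglongrightarrow> 0"
  proof (rule tendsto_of_square_le_mult[OF lim])
    show "(?c n - 0)\<^sup>2 \<le> (\<integral>x. (g x)\<^sup>2 \<partial>M) * ?d n" for n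
      using Cauchy_Schwarz_integral[OF square_integrable_diff[OF f g] g] by (simp add: mult.commute)
  qed
  ultimately show ?thesis
    using tendsto_add[OF tendsto_add[OF tendsto_const lim] tendsto_mult[OF tendsto_const \<open>?c \<longlonglongrightarrow> 0\<close>],
        of "\<integral>x. (g x)\<^sup>2 \<partial>M" 2]
    by simp
qed

lemma L2_cauchy_of_tendsto:
  assumes f: "\<And>n. square_integrable M (f n)" and g: "square_integrable M g"
    and lim: "(\<lambda>n. \<integral>x. (f n x - g x)\<^sup>2 \<partial>M) \<longlonglongrightarrow> 0" and e: "e > 0"
  shows "\<exists>N. \<forall>m\<ge>N. \<forall>n\<ge>N. (\<integral>x. (f m x - f n x)\<^sup>2 \<partial>M) < e"
proof -
  obtain N where N: "\<And>n. n \<ge> N \<Longrightarrow> (\<integral>x. (f n x - g x)\<^sup>2 \<partial>M) < e / 4"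
    using LIMSEQ_D[OF lim, of "e / 4"] e by auto
  have "(\<integral>x. (f m x - f n x)\<^sup>2 \<partial>M) < e" if "m \<ge> N" "n \<ge> N" for m n
  proof -
    have int: "integrable M (\<lambda>x. (f k x - g x)\<^sup>2)" for k
      using square_integrable_diff[OF f g] by (simp add: square_integrable_def)
    have "(\<integral>x. (f m x - f n x)\<^sup>2 \<partial>M) \<le> (\<integral>x. 2 * (f m x - g x)\<^sup>2 + 2 * (f n x - g x)\<^sup>2 \<partial>M)"
    proof (rule integral_mono)
      show "integrable M (\<lambda>x. (f m x - f n x)\<^sup>2)"
        using square_integrable_diff[OF f f] by (simp add: square_integrable_def)
      show "(f m x - f n x)\<^sup>2 \<le> 2 * (f m x - g x)\<^sup>2 + 2 * (f n x - g x)\<^sup>2" for x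
        using zero_le_power2[of "f m x + f n x - 2 * g x"] by (simp add: power2_eq_square algebra_simps)
    qed (use int in simp)
    also have "\<dots> < e" using N[OF that(1)] N[OF that(2)] int by simp
    finally show ?thesis .
  qed
  then show ?thesis by blast
qed

lemma (in sigma_finite_measure) square_integrable_AE_eq:
  assumes f: "square_integrable M f" and g: "square_integrable M g"
    and eq: "\<And>A. A \<in> fin_sets M \<Longrightarrow> (LINT x:A|M. f x) = (LINT x:A|M. g x)"
  shows "AE x in M. f x = g x"
proof -
  obtain A :: "nat \<Rightarrow> 'a set" where A: "range A \<subseteq> sets M" "(\<Union>i. A i) = space M"
    "\<And>i. emeasure M (A i) \<noteq> \<infinity>"
    using sigma_finite by blast
  have A_fin: "A i \<in> fin_sets M" for i using A by (auto simp: fin_sets_def less_top)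
  \<comment> \<open>\<open>density_unique_real\<close> needs integrable functions, so work on each set of a cover.\<close>
  have eq_on: "AE x in M. indicator (A i) x * f x = indicator (A i) x * g x" for i
  proof (rule density_unique_real)
    show "integrable M (\<lambda>x. indicator (A i) x * f x)" "integrable M (\<lambda>x. indicator (A i) x * g x)"
      using set_integrable_square_integrable[OF f A_fin] set_integrable_square_integrable[OF g A_fin]
      by (simp_all add: set_integrable_def)
    fix B assume "B \<in> sets M"
    then have "B \<inter> A i \<in> fin_sets M" using fin_sets_Int[OF A_fin] by (simp add: Int_commute)
    then show "(LINT x:B|M. indicator (A i) x * f x) = (LINT x:B|M. indicator (A i) x * g x)"
      using eq[of "B \<inter> A i"] by (simp add: set_lebesgue_integral_def indicator_inter_arith mult.assoc)
  qed
  have "AE x in M. x \<in> A i \<longrightarrow> f x = g x" for i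
    using eq_on[of i] by eventually_elim (auto simp: indicator_def)
  then have "AE x in M. \<forall>i. x \<in> A i \<longrightarrow> f x = g x"
    unfolding AE_all_countable by blast
  then show ?thesis
  proof (rule AE_mp, intro AE_I2 impI)
    fix x assume "x \<in> space M" and "\<forall>i. x \<in> A i \<longrightarrow> f x = g x"
    moreover obtain i where "x \<in> A i" using A(2) \<open>x \<in> space M\<close> by blast
    ultimately show "f x = g x" by blast
  qed
qed

lemma set_integral_sums:
  fixes f :: "'a \<Rightarrow> 'b::{banach, second_countable_topology}"
  assumes A: "\<And>i. A i \<in> sets M" "disjoint_family A" and f: "set_integrable M (\<Union>i. A i) f"
  shows "(\<lambda>i. LINT x:A i|M. f x) sums (LINT x:(\<Union>i. A i)|M. f x)"
proof -
  have Af: "set_integrable M (A i) f" for i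
    using A(1) by (rule set_integrable_subset[OF f]) auto
  have U: "(\<Union>n. \<Union>i<n. A i) = (\<Union>i. A i)" using lessI by blast
  have "incseq (\<lambda>n. \<Union>i<n. A i)" by (intro incseq_SucI) (auto simp: lessThan_Suc)
  then have "(\<lambda>n. LINT x:(\<Union>i<n. A i)|M. f x) \<longlonglongrightarrow> (LINT x:(\<Union>n. \<Union>i<n. A i)|M. f x)"
    using A(1) f unfolding U[symmetric] by (intro set_integral_cont_up) auto
  moreover have "(LINT x:(\<Union>i<n. A i)|M. f x) = (\<Sum>i<n. LINT x:A i|M. f x)" for n
    using A Af by (intro set_integral_finite_Union)
      (auto simp: disjoint_family_on_def disjoint_family_on_mono)
  ultimately show ?thesis by (simp add: sums_def U)
qed

lemma set_integral_null_set:
  fixes f :: "'a \<Rightarrow> real"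
  assumes "A \<in> null_sets M"
  shows "(LINT x:A|M. f x) = 0"
proof -
  have "AE x in M. indicator A x * f x = 0"
    using AE_not_in[OF assms] by eventually_elim simp
  then show ?thesis unfolding set_lebesgue_integral_def by (simp add: integral_eq_zero_AE)
qed

lemma L2_density_eq:
  assumes "F \<in> extensional (fin_sets M)" "G \<in> extensional (fin_sets M)"
    and "L2_density M F \<phi>" "L2_density M G \<phi>"
  shows "F = G"
  using assms by (intro extensionalityI[of F "fin_sets M" G]) (auto simp: L2_density_def)

section \<open>Step functions\<close>

definition step_fun :: "(real \<times> 'a set) list \<Rightarrow> 'a \<Rightarrow> real" where
  "step_fun rs x = (\<Sum>(c, B)\<leftarrow>rs. c * indicator B x)"

lemma sum_list_scaled_coeffs:
  fixes f :: "'b \<Rightarrow> real"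
  shows "(\<Sum>(c, b)\<leftarrow>map (apfst ((*) a)) rs. c * f b) = a * (\<Sum>(c, b)\<leftarrow>rs. c * f b)"
  by (induction rs) (auto simp: algebra_simps)

lemma step_fun_Nil [simp]: "step_fun [] x = 0"
  and step_fun_Cons [simp]: "step_fun ((c, B) # rs) x = c * indicator B x + step_fun rs x"
  and step_fun_append [simp]: "step_fun (rs @ ss) x = step_fun rs x + step_fun ss x"
  unfolding step_fun_def by simp_all

lemma step_fun_scaled [simp]: "step_fun (map (apfst ((*) a)) rs) x = a * step_fun rs x"
  unfolding step_fun_def by (rule sum_list_scaled_coeffs)

lemma snd_image_apfst [simp]: "snd ` apfst f ` A = snd ` A"
  by force

lemma square_integrable_step_fun:
  "snd ` set rs \<subseteq> fin_sets M \<Longrightarrow> square_integrable M (step_fun rs)"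
proof (induction rs)
  case Nil
  then show ?case by (simp add: square_integrable_def)
next
  case (Cons p rs)
  obtain c B where p: "p = (c, B)" by force
  have "square_integrable M (\<lambda>x. c * indicator B x + step_fun rs x)"
    using Cons p by (intro square_integrable_add square_integrable_cmult square_integrable_indicator) auto
  then show ?case by (simp add: p)
qed

lemma set_integral_step_fun:
  assumes "A \<in> fin_sets M" "snd ` set rs \<subseteq> fin_sets M"
  shows "(LINT x:A|M. step_fun rs x) = (\<Sum>(c, B)\<leftarrow>rs. c * measure M (A \<inter> B))"
  using assms(2)
proof (induction rs)
  case (Cons p rs)
  obtain c B where p: "p = (c, B)" by force
  have B: "B \<in> fin_sets M" and rs: "snd ` set rs \<subseteq> fin_sets M" using Cons.prems p by auto
  have "(LINT x:A|M. step_fun (p # rs) x) = c * (LINT x:A|M. indicator B x) + (LINT x:A|M. step_fun rs x)"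
    using set_integrable_square_integrable[OF square_integrable_indicator[OF B] assms(1)]
      set_integrable_square_integrable[OF square_integrable_step_fun[OF rs] assms(1)]
    by (simp add: p set_integral_add set_integrable_mult_right)
  also have "(LINT x:A|M. indicator B x) = measure M (A \<inter> B)"
    using assms(1) B unfolding fin_sets_def set_lebesgue_integral_def
    by (simp add: indicator_inter_arith[symmetric] sets.Int)
  finally show ?case using Cons.IH[OF rs] by (simp add: p)
qed (simp add: set_lebesgue_integral_def)

lemma integral_step_fun_mult:
  assumes rs: "snd ` set rs \<subseteq> fin_sets M" and ss: "snd ` set ss \<subseteq> fin_sets M"
  shows "(\<integral>x. step_fun rs x * step_fun ss x \<partial>M) = (\<Sum>(c, B)\<leftarrow>rs. c * (LINT x:B|M. step_fun ss x))"
  using rs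
proof (induction rs)
  case (Cons p rs)
  obtain c B where p: "p = (c, B)" by force
  have B: "B \<in> fin_sets M" and rs: "snd ` set rs \<subseteq> fin_sets M" using Cons.prems p by auto
  have "integrable M (\<lambda>x. indicator B x * step_fun ss x)" "integrable M (\<lambda>x. step_fun rs x * step_fun ss x)"
    using B rs ss by (auto intro!: integrable_mult_square_integrable square_integrable_indicator
        square_integrable_step_fun)
  then have "(\<integral>x. step_fun (p # rs) x * step_fun ss x \<partial>M)
      = c * (LINT x:B|M. step_fun ss x) + (\<integral>x. step_fun rs x * step_fun ss x \<partial>M)"
    by (simp add: p distrib_right mult.assoc set_lebesgue_integral_def)
  then show ?case using Cons.IH[OF rs] by (simp add: p)
qed simp

lemma simple_function_as_step_fun:
  assumes s: "simple_function M s" and s2: "integrable M (\<lambda>x. (s x)\<^sup>2)"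
  obtains rs where "snd ` set rs \<subseteq> fin_sets M" "\<And>x. x \<in> space M \<Longrightarrow> step_fun rs x = s x"
proof -
  define V where "V = s ` space M - {0}"
  have V: "finite V" using simple_functionD(1)[OF s] unfolding V_def by simp
  obtain xs where xs: "set xs = V" "distinct xs" using finite_distinct_list[OF V] by blast
  define B where "B c = s -` {c} \<inter> space M" for c
  have B_fin: "B c \<in> fin_sets M" if "c \<in> V" for c
  proof -
    have Bs: "B c \<in> sets M" unfolding B_def by (rule simple_functionD(2)[OF s])
    have "ennreal (c\<^sup>2) * emeasure M (B c) = (\<integral>\<^sup>+x. ennreal (c\<^sup>2) * indicator (B c) x \<partial>M)"
      by (rule nn_integral_cmult_indicator[symmetric, OF Bs])
    also have "\<dots> \<le> (\<integral>\<^sup>+x. ennreal ((s x)\<^sup>2) \<partial>M)"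
      by (intro nn_integral_mono) (auto simp: B_def indicator_def)
    also have "\<dots> < \<infinity>" using s2 by (simp add: nn_integral_eq_integral)
    finally show ?thesis
      using Bs that unfolding V_def fin_sets_def by (auto simp: ennreal_mult_less_top)
  qed
  have "step_fun (map (\<lambda>c. (c, B c)) xs) x = s x" if x: "x \<in> space M" for x
  proof -
    have "step_fun (map (\<lambda>c. (c, B c)) xs) x = (\<Sum>c\<in>V. c * indicator (B c) x)"
      using xs by (simp add: step_fun_def o_def sum_list_distinct_conv_sum_set)
    also have "\<dots> = (\<Sum>c\<in>V. if c = s x then c else 0)"
      by (intro sum.cong) (auto simp: B_def x indicator_def)
    also have "\<dots> = s x" using V x unfolding V_def by (simp add: sum.delta')
    finally show ?thesis .
  qed
  moreover have "snd ` set (map (\<lambda>c. (c, B c)) xs) \<subseteq> fin_sets M" using B_fin xs(1) by auto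
  ultimately show ?thesis using that by blast
qed

lemma simple_function_L2_approx:
  assumes \<phi>: "square_integrable M \<phi>"
  obtains s where "\<And>i. simple_function M (s i)" "\<And>i. integrable M (\<lambda>x. (s i x)\<^sup>2)"
    "(\<lambda>i. \<integral>x. (s i x - \<phi> x)\<^sup>2 \<partial>M) \<longlonglongrightarrow> 0"
proof -
  have \<phi>m: "\<phi> \<in> borel_measurable M" and \<phi>2: "integrable M (\<lambda>x. (\<phi> x)\<^sup>2)"
    using \<phi> unfolding square_integrable_def by auto
  obtain s where s: "\<And>i. simple_function M (s i)" "\<And>x. x \<in> space M \<Longrightarrow> (\<lambda>i. s i x) \<longlonglongrightarrow> \<phi> x"
    "\<And>i x. x \<in> space M \<Longrightarrow> \<bar>s i x\<bar> \<le> 2 * \<bar>\<phi> x\<bar>"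
    using borel_measurable_implies_sequence_metric[OF \<phi>m, of 0] by force
  have sq: "(s i x)\<^sup>2 \<le> 4 * (\<phi> x)\<^sup>2" "(s i x - \<phi> x)\<^sup>2 \<le> 9 * (\<phi> x)\<^sup>2"
    if "x \<in> space M" for i x
  proof -
    have "\<bar>s i x\<bar> \<le> 2 * \<bar>\<phi> x\<bar>" "\<bar>s i x - \<phi> x\<bar> \<le> 3 * \<bar>\<phi> x\<bar>"
      using s(3)[OF that, of i] abs_triangle_ineq4[of "s i x" "\<phi> x"] by linarith+
    from power_mono[OF this(1), of 2] power_mono[OF this(2), of 2] show
      "(s i x)\<^sup>2 \<le> 4 * (\<phi> x)\<^sup>2" "(s i x - \<phi> x)\<^sup>2 \<le> 9 * (\<phi> x)\<^sup>2"
      by (simp_all add: power_mult_distrib)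
  qed
  have int: "integrable M (\<lambda>x. (s i x)\<^sup>2)" for i
  proof (rule Bochner_Integration.integrable_bound)
    show "integrable M (\<lambda>x. 4 * (\<phi> x)\<^sup>2)" using \<phi>2 by simp
    show "(\<lambda>x. (s i x)\<^sup>2) \<in> borel_measurable M"
      using borel_measurable_simple_function[OF s(1)] by measurable
    show "AE x in M. norm ((s i x)\<^sup>2) \<le> norm (4 * (\<phi> x)\<^sup>2)"
      using sq(1) by (intro AE_I2) simp
  qed
  have "(\<lambda>i. \<integral>x. (s i x - \<phi> x)\<^sup>2 \<partial>M) \<longlonglongrightarrow> (\<integral>x. 0 \<partial>M)"
  proof (rule integral_dominated_convergence[where w="\<lambda>x. 9 * (\<phi> x)\<^sup>2"])
    show "(\<lambda>x. (s i x - \<phi> x)\<^sup>2) \<in> borel_measurable M" for i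
      using borel_measurable_simple_function[OF s(1)] \<phi>m by measurable
    show "AE x in M. (\<lambda>i. (s i x - \<phi> x)\<^sup>2) \<longlonglongrightarrow> 0"
    proof (rule AE_I2)
      fix x assume "x \<in> space M"
      then have "(\<lambda>i. (s i x - \<phi> x)\<^sup>2) \<longlonglongrightarrow> (\<phi> x - \<phi> x)\<^sup>2" by (intro tendsto_intros s(2))
      then show "(\<lambda>i. (s i x - \<phi> x)\<^sup>2) \<longlonglongrightarrow> 0" by simp
    qed
    show "AE x in M. norm ((s i x - \<phi> x)\<^sup>2) \<le> 9 * (\<phi> x)\<^sup>2" for i
      using sq(2) by (intro AE_I2) simp
  qed (use \<phi>2 in auto)
  then show ?thesis by (intro that[OF s(1) int]) simp
qed

lemma step_fun_L2_dense:
  assumes \<phi>: "square_integrable M \<phi>"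
  obtains rs where "\<And>n. snd ` set (rs n) \<subseteq> fin_sets M"
    "(\<lambda>n. \<integral>x. (step_fun (rs n) x - \<phi> x)\<^sup>2 \<partial>M) \<longlonglongrightarrow> 0"
proof -
  obtain s where s: "\<And>i. simple_function M (s i)" "\<And>i. integrable M (\<lambda>x. (s i x)\<^sup>2)"
    and lim: "(\<lambda>i. \<integral>x. (s i x - \<phi> x)\<^sup>2 \<partial>M) \<longlonglongrightarrow> 0"
    using simple_function_L2_approx[OF \<phi>] by blast
  have "\<forall>i. \<exists>rs. snd ` set rs \<subseteq> fin_sets M \<and> (\<forall>x\<in>space M. step_fun rs x = s i x)"
    using simple_function_as_step_fun[OF s(1,2)] by metis
  then obtain rs where rs: "\<And>i. snd ` set (rs i) \<subseteq> fin_sets M"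
    "\<And>i x. x \<in> space M \<Longrightarrow> step_fun (rs i) x = s i x"
    by metis
  have "(\<integral>x. (step_fun (rs i) x - \<phi> x)\<^sup>2 \<partial>M) = (\<integral>x. (s i x - \<phi> x)\<^sup>2 \<partial>M)" for i
    by (intro Bochner_Integration.integral_cong) (auto simp: rs(2))
  with lim have "(\<lambda>i. \<integral>x. (step_fun (rs i) x - \<phi> x)\<^sup>2 \<partial>M) \<longlonglongrightarrow> 0" by simp
  then show ?thesis by (rule that[OF rs(1)])
qed

text \<open>If \<open>F B = (LINT x:B|M. \<phi> x)\<close>, then \<open>step_energy M F rs\<close> equals
  \<open>\<integral>(step_fun rs - \<phi>)\<^sup>2 - \<integral>\<phi>\<^sup>2\<close>; so a density of \<open>F\<close> can be found by minimising it.\<close>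
definition step_energy :: "'a measure \<Rightarrow> ('a set \<Rightarrow> real) \<Rightarrow> (real \<times> 'a set) list \<Rightarrow> real" where
  "step_energy M F rs = (\<integral>x. (step_fun rs x)\<^sup>2 \<partial>M) - 2 * (\<Sum>(c, B)\<leftarrow>rs. c * F B)"

lemma step_energy_lower_bound:
  assumes "(\<Sum>(c, B)\<leftarrow>rs. c * F B)\<^sup>2 \<le> C * (\<integral>x. (step_fun rs x)\<^sup>2 \<partial>M)" and "0 \<le> C"
  shows "- C \<le> step_energy M F rs"
proof -
  define a where "a = (\<integral>x. (step_fun rs x)\<^sup>2 \<partial>M)"
  define L where "L = (\<Sum>(c, B)\<leftarrow>rs. c * F B)"
  have a: "0 \<le> a" unfolding a_def by simp
  have L: "L\<^sup>2 \<le> C * a" using assms(1) unfolding a_def L_def .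
  have "4 * (C * a) \<le> (a + C)\<^sup>2"
    using zero_le_power2[of "a - C"] by (simp add: power2_eq_square algebra_simps)
  then have "(2 * L)\<^sup>2 \<le> (a + C)\<^sup>2" using L by (simp add: power_mult_distrib)
  then have "2 * L \<le> a + C" by (rule power2_le_imp_le) (use a assms(2) in linarith)
  then show ?thesis unfolding step_energy_def a_def L_def by simp
qed

lemma step_energy_midpoint:
  assumes r: "snd ` set r \<subseteq> fin_sets M" and s: "snd ` set s \<subseteq> fin_sets M"
  shows "step_energy M F r + step_energy M F s - 2 * step_energy M F (map (apfst ((*) (1 / 2))) (r @ s))
    = (\<integral>x. (step_fun r x - step_fun s x)\<^sup>2 \<partial>M) / 2"
proof -
  let ?p = "step_fun r" and ?q = "step_fun s" and ?m = "map (apfst ((*) (1 / 2))) (r @ s)"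
  have "integrable M (\<lambda>x. (?p x)\<^sup>2)" "integrable M (\<lambda>x. (?q x)\<^sup>2)" "integrable M (\<lambda>x. (step_fun ?m x)\<^sup>2)"
    using r s square_integrable_step_fun[of r M] square_integrable_step_fun[of s M]
      square_integrable_step_fun[of ?m M] by (simp_all add: square_integrable_def image_Un)
  then have "(\<integral>x. (?p x)\<^sup>2 \<partial>M) + (\<integral>x. (?q x)\<^sup>2 \<partial>M) - 2 * (\<integral>x. (step_fun ?m x)\<^sup>2 \<partial>M)
      = (\<integral>x. (?p x)\<^sup>2 + (?q x)\<^sup>2 - 2 * (step_fun ?m x)\<^sup>2 \<partial>M)"
    by (simp del: step_fun_scaled step_fun_append)
  also have "\<dots> = (\<integral>x. (?p x - ?q x)\<^sup>2 / 2 \<partial>M)"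
    by (intro Bochner_Integration.integral_cong) (simp_all add: power2_eq_square field_simps)
  finally show ?thesis
    using sum_list_scaled_coeffs[where a = "1 / 2" and f = F and rs = "r @ s"]
    unfolding step_energy_def by (simp add: algebra_simps)
qed

lemma step_energy_append:
  assumes r: "snd ` set r \<subseteq> fin_sets M" and B: "B \<in> fin_sets M"
  shows "step_energy M F (r @ [(t, B)]) = step_energy M F r
    + 2 * t * (LINT x:B|M. step_fun r x) + t\<^sup>2 * measure M B - 2 * t * F B"
proof -
  let ?p = "step_fun r"
  have "integrable M (\<lambda>x. (?p x)\<^sup>2)" "integrable M (\<lambda>x. indicator B x * ?p x)"
    using square_integrable_step_fun[OF r]
      integrable_mult_square_integrable[OF square_integrable_indicator[OF B]
        square_integrable_step_fun[OF r]]
    by (simp_all add: square_integrable_def)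
  moreover have "integrable M (indicator B :: 'a \<Rightarrow> real)"
    using B by (simp add: fin_sets_def integrable_indicator_iff)
  moreover have "(\<lambda>x. (step_fun (r @ [(t, B)]) x)\<^sup>2)
      = (\<lambda>x. (?p x)\<^sup>2 + 2 * t * (indicator B x * ?p x) + t\<^sup>2 * indicator B x)"
    by (auto simp: fun_eq_iff power2_eq_square algebra_simps indicator_def)
  ultimately have "(\<integral>x. (step_fun (r @ [(t, B)]) x)\<^sup>2 \<partial>M)
      = (\<integral>x. (?p x)\<^sup>2 \<partial>M) + 2 * t * (LINT x:B|M. ?p x) + t\<^sup>2 * measure M B"
    using B by (simp add: set_lebesgue_integral_def fin_sets_def)
  then show ?thesis unfolding step_energy_def by (simp add: algebra_simps)
qed

lemma step_energy_minimizing_cauchy: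
  assumes min: "\<And>r. snd ` set r \<subseteq> fin_sets M \<Longrightarrow> q \<le> step_energy M F r"
    and rs: "\<And>n. snd ` set (rs n) \<subseteq> fin_sets M"
    and lim: "(\<lambda>n. step_energy M F (rs n)) \<longlonglongrightarrow> q" and e: "e > 0"
  shows "\<exists>N. \<forall>m\<ge>N. \<forall>n\<ge>N. (\<integral>x. (step_fun (rs m) x - step_fun (rs n) x)\<^sup>2 \<partial>M) < e"
proof -
  obtain N where N: "\<And>n. n \<ge> N \<Longrightarrow> step_energy M F (rs n) < q + e / 4"
    using order_tendstoD(2)[OF lim, of "q + e / 4"] e by (auto simp: eventually_sequentially)
  have "(\<integral>x. (step_fun (rs m) x - step_fun (rs n) x)\<^sup>2 \<partial>M) < e" if "m \<ge> N" "n \<ge> N" for m n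
  proof -
    have "q \<le> step_energy M F (map (apfst ((*) (1 / 2))) (rs m @ rs n))"
      using rs by (intro min) (simp add: image_Un)
    then have "(\<integral>x. (step_fun (rs m) x - step_fun (rs n) x)\<^sup>2 \<partial>M) / 2
        \<le> step_energy M F (rs m) + step_energy M F (rs n) - 2 * q"
      using step_energy_midpoint[OF rs[of m] rs[of n], where F = F] by simp
    then show ?thesis using N[OF that(1)] N[OF that(2)] by simp
  qed
  then show ?thesis by blast
qed

lemma step_energy_minimizer_represents:
  assumes min: "\<And>r. snd ` set r \<subseteq> fin_sets M \<Longrightarrow> q \<le> step_energy M F r"
    and rs: "\<And>n. snd ` set (rs n) \<subseteq> fin_sets M"
    and lim: "(\<lambda>n. step_energy M F (rs n)) \<longlonglongrightarrow> q"
    and \<phi>: "square_integrable M \<phi>" and conv: "(\<lambda>n. \<integral>x. (step_fun (rs n) x - \<phi> x)\<^sup>2 \<partial>M) \<longlonglongrightarrow> 0"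
    and B: "B \<in> fin_sets M"
  shows "F B = (LINT x:B|M. \<phi> x)"
proof -
  define a where "a = (LINT x:B|M. \<phi> x)"
  have sets: "(\<lambda>n. LINT x:B|M. step_fun (rs n) x) \<longlonglongrightarrow> a"
    unfolding a_def using B square_integrable_step_fun[OF rs] \<phi> conv
    by (rule set_integral_tendsto_of_L2_tendsto)
  \<comment> \<open>Perturbing the minimising sequence by \<open>t\<close> times the indicator of \<open>B\<close> cannot lower the energy.\<close>
  have "0 \<le> 0 - 2 * t * (F B - a) + t\<^sup>2 * measure M B" for t
  proof -
    have "(\<lambda>n. step_energy M F (rs n) + 2 * t * (LINT x:B|M. step_fun (rs n) x)
          + t\<^sup>2 * measure M B - 2 * t * F B)
        \<longlonglongrightarrow> q + 2 * t * a + t\<^sup>2 * measure M B - 2 * t * F B"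
      by (intro tendsto_intros lim sets)
    moreover have "q \<le> step_energy M F (rs n) + 2 * t * (LINT x:B|M. step_fun (rs n) x)
        + t\<^sup>2 * measure M B - 2 * t * F B" for n
      using min[of "rs n @ [(t, B)]"] rs B by (simp add: step_energy_append)
    ultimately have "q \<le> q + 2 * t * a + t\<^sup>2 * measure M B - 2 * t * F B"
      by (intro LIMSEQ_le_const) auto
    then show ?thesis by (simp add: algebra_simps)
  qed
  then have "(F B - a)\<^sup>2 \<le> 0 * measure M B" by (intro square_le_of_quadratic_nonneg) auto
  then show ?thesis unfolding a_def by simp
qed

lemma (in sigma_finite_measure) step_functional_representation:
  assumes bound: "\<And>r. snd ` set r \<subseteq> fin_sets M \<Longrightarrow>
    (\<Sum>(c, B)\<leftarrow>r. c * F B)\<^sup>2 \<le> C * (\<integral>x. (step_fun r x)\<^sup>2 \<partial>M)" and C: "0 \<le> C"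
  obtains \<phi> where "square_integrable M \<phi>" "\<And>B. B \<in> fin_sets M \<Longrightarrow> F B = (LINT x:B|M. \<phi> x)"
proof -
  let ?E = "step_energy M F ` {r. snd ` set r \<subseteq> fin_sets M}"
  have "step_energy M F [] \<in> ?E" by simp
  then have ne: "?E \<noteq> {}" by blast
  have bdd: "bdd_below ?E"
    using step_energy_lower_bound[OF bound C] by (intro bdd_belowI[of _ "- C"]) auto
  have min: "Inf ?E \<le> step_energy M F r" if "snd ` set r \<subseteq> fin_sets M" for r
    using bdd that by (intro cInf_lower) auto
  obtain u where u: "\<And>n. u n \<in> ?E" "u \<longlonglongrightarrow> Inf ?E"
    using closure_contains_Inf[OF ne bdd] unfolding closure_sequential by blast
  have "\<forall>n. \<exists>r. snd ` set r \<subseteq> fin_sets M \<and> u n = step_energy M F r" using u(1) by blast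
  from choice[OF this] obtain rs
    where rs: "\<And>n. snd ` set (rs n) \<subseteq> fin_sets M" and u_eq: "\<And>n. u n = step_energy M F (rs n)"
    by blast
  have lim: "(\<lambda>n. step_energy M F (rs n)) \<longlonglongrightarrow> Inf ?E"
    using u(2) unfolding u_eq[abs_def] .
  obtain \<phi> where \<phi>: "square_integrable M \<phi>" "(\<lambda>n. \<integral>x. (step_fun (rs n) x - \<phi> x)\<^sup>2 \<partial>M) \<longlonglongrightarrow> 0"
    using L2_complete[OF square_integrable_step_fun[OF rs] step_energy_minimizing_cauchy[OF min rs lim]]
    by blast
  show ?thesis by (rule that[OF \<phi>(1) step_energy_minimizer_represents[OF min rs lim \<phi>]])
qed

section \<open>Reproducing kernel Hilbert spaces\<close>

locale rkhs =
  fixes S :: "'s set" and K :: "'s \<Rightarrow> 's \<Rightarrow> real" and H :: "('s \<Rightarrow> real) set"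
    and ip :: "('s \<Rightarrow> real) \<Rightarrow> ('s \<Rightarrow> real) \<Rightarrow> real"
  assumes is_rkhs: "is_rkhs S K H ip"
begin

definition kernel_section :: "'s \<Rightarrow> 's \<Rightarrow> real" where
  "kernel_section s = (\<lambda>t. if t \<in> S then K t s else 0)"

definition kernel_comb :: "(real \<times> 's) list \<Rightarrow> 's \<Rightarrow> real" where
  "kernel_comb rs t = (\<Sum>(c, s)\<leftarrow>rs. c * kernel_section s t)"

lemma H_extensional: "H \<subseteq> extensional S"
  and H_zero: "(\<lambda>x. 0) \<in> H"
  and H_add: "f \<in> H \<Longrightarrow> g \<in> H \<Longrightarrow> (\<lambda>x. f x + g x) \<in> H"
  and H_scale: "f \<in> H \<Longrightarrow> (\<lambda>x. c * f x) \<in> H"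
  and ip_sym: "f \<in> H \<Longrightarrow> g \<in> H \<Longrightarrow> ip f g = ip g f"
  and ip_add: "f \<in> H \<Longrightarrow> g \<in> H \<Longrightarrow> h \<in> H \<Longrightarrow> ip (\<lambda>x. f x + g x) h = ip f h + ip g h"
  and ip_scale: "f \<in> H \<Longrightarrow> g \<in> H \<Longrightarrow> ip (\<lambda>x. c * f x) g = c * ip f g"
  and ip_nonneg: "f \<in> H \<Longrightarrow> 0 \<le> ip f f"
  and H_complete: "(\<And>n. u n \<in> H) \<Longrightarrow>
    (\<And>e. e > 0 \<Longrightarrow> \<exists>N. \<forall>m\<ge>N. \<forall>n\<ge>N. ip (\<lambda>x. u m x - u n x) (\<lambda>x. u m x - u n x) < e) \<Longrightarrow>
    \<exists>v\<in>H. (\<lambda>n. ip (\<lambda>x. u n x - v x) (\<lambda>x. u n x - v x)) \<longlonglongrightarrow> 0"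
  and kernel_section_in_H: "s \<in> S \<Longrightarrow> kernel_section s \<in> H"
  and reproducing: "F \<in> H \<Longrightarrow> s \<in> S \<Longrightarrow> F s = ip F (kernel_section s)"
  using is_rkhs unfolding is_rkhs_def kernel_section_def by blast+

lemma H_diff: "f \<in> H \<Longrightarrow> g \<in> H \<Longrightarrow> (\<lambda>x. f x - g x) \<in> H"
  using H_add[OF _ H_scale, of f g "-1"] by simp

lemma ip_expand:
  assumes a: "a \<in> H" and b: "b \<in> H"
  shows "ip (\<lambda>x. a x + t * b x) (\<lambda>x. a x + t * b x) = ip a a + 2 * t * ip a b + t\<^sup>2 * ip b b"
proof -
  have tb: "(\<lambda>x. t * b x) \<in> H" and ab: "(\<lambda>x. a x + t * b x) \<in> H" using a b by (auto intro: H_add H_scale)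
  have "ip (\<lambda>x. a x + t * b x) (\<lambda>x. a x + t * b x) = ip a (\<lambda>x. a x + t * b x) + t * ip b (\<lambda>x. a x + t * b x)"
    using ip_add[OF a tb ab] ip_scale[OF b ab] by simp
  also have "ip a (\<lambda>x. a x + t * b x) = ip a a + t * ip a b"
    using ip_sym[OF a ab] ip_add[OF a tb a] ip_scale[OF b a] ip_sym[OF a b] by simp
  also have "ip b (\<lambda>x. a x + t * b x) = ip a b + t * ip b b"
    using ip_sym[OF b ab] ip_add[OF a tb b] ip_scale[OF b b] by simp
  finally show ?thesis by (simp add: power2_eq_square algebra_simps)
qed

lemma ip_Cauchy_Schwarz:
  assumes f: "f \<in> H" and g: "g \<in> H"
  shows "(ip f g)\<^sup>2 \<le> ip f f * ip g g"
proof (rule square_le_of_quadratic_nonneg)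
  fix t
  show "0 \<le> ip f f - 2 * t * ip f g + t\<^sup>2 * ip g g"
    using ip_nonneg[OF H_add[OF f H_scale[OF g]], of "- t"] ip_expand[OF f g, of "- t"] by simp
qed (rule ip_nonneg[OF g])

lemma ip_self_tendsto:
  assumes f: "\<And>n. f n \<in> H" and g: "g \<in> H"
    and lim: "(\<lambda>n. ip (\<lambda>x. f n x - g x) (\<lambda>x. f n x - g x)) \<longlonglongrightarrow> 0"
  shows "(\<lambda>n. ip (f n) (f n)) \<longlonglongrightarrow> ip g g"
proof -
  let ?e = "\<lambda>n x. f n x - g x"
  have e: "?e n \<in> H" for n using H_diff[OF f g] .
  have "ip (f n) (f n) = ip g g + 2 * ip g (?e n) + ip (?e n) (?e n)" for n
    using ip_expand[OF g e, of 1] by simp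
  moreover have "(\<lambda>n. ip g (?e n)) \<longlonglongrightarrow> 0"
  proof (rule tendsto_of_square_le_mult[OF lim])
    show "(ip g (?e n) - 0)\<^sup>2 \<le> ip g g * ip (?e n) (?e n)" for n
      using ip_Cauchy_Schwarz[OF g e] by simp
  qed
  ultimately show ?thesis
    using tendsto_add[OF tendsto_add[OF tendsto_const
        tendsto_mult[OF tendsto_const \<open>(\<lambda>n. ip g (?e n)) \<longlonglongrightarrow> 0\<close>]] lim, of "ip g g" 2]
    by simp
qed

lemma eval_tendsto:
  assumes f: "\<And>n. f n \<in> H" and g: "g \<in> H" and s: "s \<in> S"
    and lim: "(\<lambda>n. ip (\<lambda>x. f n x - g x) (\<lambda>x. f n x - g x)) \<longlonglongrightarrow> 0"
  shows "(\<lambda>n. f n s) \<longlonglongrightarrow> g s"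
proof (rule tendsto_of_square_le_mult[OF lim])
  fix n
  have e: "(\<lambda>x. f n x - g x) \<in> H" using H_diff[OF f g] .
  have "f n s - g s = ip (\<lambda>x. f n x - g x) (kernel_section s)" using reproducing[OF e s] by simp
  moreover have "ip (kernel_section s) (kernel_section s) = K s s"
    using reproducing[OF kernel_section_in_H[OF s] s] s by (simp add: kernel_section_def)
  ultimately show "(f n s - g s)\<^sup>2 \<le> K s s * ip (\<lambda>x. f n x - g x) (\<lambda>x. f n x - g x)"
    using ip_Cauchy_Schwarz[OF e kernel_section_in_H[OF s]] by (simp add: mult.commute)
qed

lemma kernel_comb_in_H: "snd ` set rs \<subseteq> S \<Longrightarrow> kernel_comb rs \<in> H"
proof (induction rs)
  case Nil
  then show ?case using H_zero by (simp add: kernel_comb_def)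
next
  case (Cons p rs)
  obtain c s where p: "p = (c, s)" by force
  have "(\<lambda>t. c * kernel_section s t + kernel_comb rs t) \<in> H"
    using Cons p by (intro H_add H_scale kernel_section_in_H) auto
  then show ?case by (simp add: p kernel_comb_def)
qed

lemma ip_kernel_comb:
  assumes "snd ` set rs \<subseteq> S" and h: "h \<in> H"
  shows "ip (kernel_comb rs) h = (\<Sum>(c, s)\<leftarrow>rs. c * h s)"
  using assms(1)
proof (induction rs)
  case Nil
  then show ?case using ip_scale[OF H_zero h, of 0] by (simp add: kernel_comb_def)
next
  case (Cons p rs)
  obtain c s where p: "p = (c, s)" by force
  have s: "s \<in> S" and rs: "snd ` set rs \<subseteq> S" using Cons.prems p by auto
  have "kernel_comb (p # rs) = (\<lambda>t. c * kernel_section s t + kernel_comb rs t)"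
    by (simp add: p kernel_comb_def fun_eq_iff)
  then have "ip (kernel_comb (p # rs)) h = c * ip (kernel_section s) h + ip (kernel_comb rs) h"
    using ip_add[OF H_scale[OF kernel_section_in_H[OF s]] kernel_comb_in_H[OF rs] h]
      ip_scale[OF kernel_section_in_H[OF s] h] by simp
  also have "ip (kernel_section s) h = h s"
    using reproducing[OF h s] ip_sym[OF h kernel_section_in_H[OF s]] by simp
  finally show ?case using Cons.IH[OF rs] by (simp add: p)
qed

lemma kernel_comb_diff:
  "kernel_comb r t - kernel_comb s t = kernel_comb (r @ map (apfst ((*) (-1))) s) t"
  using sum_list_scaled_coeffs[where a = "-1" and f = "\<lambda>s. kernel_section s t" and rs = s]
  unfolding kernel_comb_def by simp

end

section \<open>The kernel \<open>\<mu>(A \<inter> B)\<close>\<close>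

locale measure_rkhs = rkhs "fin_sets M" "mu_kernel M" H ip
  for M :: "'a measure" and H ip
begin

lemma kernel_comb_eq_set_integral:
  assumes rs: "snd ` set rs \<subseteq> fin_sets M" and A: "A \<in> fin_sets M"
  shows "kernel_comb rs A = (LINT x:A|M. step_fun rs x)"
  using set_integral_step_fun[OF A rs] A by (simp add: kernel_comb_def kernel_section_def mu_kernel_def)

lemma ip_kernel_comb_kernel_comb:
  assumes rs: "snd ` set rs \<subseteq> fin_sets M" and ss: "snd ` set ss \<subseteq> fin_sets M"
  shows "ip (kernel_comb rs) (kernel_comb ss) = (\<integral>x. step_fun rs x * step_fun ss x \<partial>M)"
proof -
  have "ip (kernel_comb rs) (kernel_comb ss) = (\<Sum>(c, B)\<leftarrow>rs. c * kernel_comb ss B)"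
    using ip_kernel_comb[OF rs kernel_comb_in_H[OF ss]] .
  also have "\<dots> = (\<Sum>(c, B)\<leftarrow>rs. c * (LINT x:B|M. step_fun ss x))"
  proof (intro arg_cong[where f = sum_list] map_cong refl)
    fix p assume "p \<in> set rs"
    with rs show "(case p of (c, B) \<Rightarrow> c * kernel_comb ss B)
        = (case p of (c, B) \<Rightarrow> c * (LINT x:B|M. step_fun ss x))"
      by (cases p) (auto simp: kernel_comb_eq_set_integral[OF ss])
  qed
  also have "\<dots> = (\<integral>x. step_fun rs x * step_fun ss x \<partial>M)"
    using integral_step_fun_mult[OF rs ss] ..
  finally show ?thesis .
qed

lemma ip_kernel_comb_diff:
  assumes r: "snd ` set r \<subseteq> fin_sets M" and s: "snd ` set s \<subseteq> fin_sets M"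
  shows "ip (\<lambda>x. kernel_comb r x - kernel_comb s x) (\<lambda>x. kernel_comb r x - kernel_comb s x)
    = (\<integral>x. (step_fun r x - step_fun s x)\<^sup>2 \<partial>M)"
proof -
  let ?d = "r @ map (apfst ((*) (-1))) s"
  have d: "snd ` set ?d \<subseteq> fin_sets M" using r s by (simp add: image_Un)
  show ?thesis
    using ip_kernel_comb_kernel_comb[OF d d] unfolding kernel_comb_diff
    by (simp add: power2_eq_square)
qed

lemma H_element_of_L2:
  assumes \<phi>: "square_integrable M \<phi>"
  obtains G where "G \<in> H" "L2_density M G \<phi>" "ip G G = (\<integral>x. (\<phi> x)\<^sup>2 \<partial>M)"
proof -
  obtain rs where rs: "\<And>n. snd ` set (rs n) \<subseteq> fin_sets M"
    and conv: "(\<lambda>n. \<integral>x. (step_fun (rs n) x - \<phi> x)\<^sup>2 \<partial>M) \<longlonglongrightarrow> 0"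
    using step_fun_L2_dense[OF \<phi>] by blast
  have step: "square_integrable M (step_fun (rs n))" for n by (rule square_integrable_step_fun[OF rs])
  have g: "kernel_comb (rs n) \<in> H" for n by (rule kernel_comb_in_H[OF rs])
  have "\<exists>N. \<forall>m\<ge>N. \<forall>n\<ge>N.
      ip (\<lambda>x. kernel_comb (rs m) x - kernel_comb (rs n) x)
        (\<lambda>x. kernel_comb (rs m) x - kernel_comb (rs n) x) < e"
    if "e > 0" for e
    using L2_cauchy_of_tendsto[OF step \<phi> conv that] by (simp add: ip_kernel_comb_diff[OF rs rs])
  from H_complete[of "\<lambda>n. kernel_comb (rs n)", OF g this] obtain G where G: "G \<in> H"
    and lim: "(\<lambda>n. ip (\<lambda>x. kernel_comb (rs n) x - G x) (\<lambda>x. kernel_comb (rs n) x - G x)) \<longlonglongrightarrow> 0"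
    by blast
  have "G A = (LINT x:A|M. \<phi> x)" if A: "A \<in> fin_sets M" for A
  proof (rule LIMSEQ_unique)
    show "(\<lambda>n. kernel_comb (rs n) A) \<longlonglongrightarrow> G A" by (rule eval_tendsto[OF g G A lim])
    show "(\<lambda>n. kernel_comb (rs n) A) \<longlonglongrightarrow> (LINT x:A|M. \<phi> x)"
      using set_integral_tendsto_of_L2_tendsto[OF A step \<phi> conv]
      by (simp add: kernel_comb_eq_set_integral[OF rs A])
  qed
  moreover have "ip G G = (\<integral>x. (\<phi> x)\<^sup>2 \<partial>M)"
  proof (rule LIMSEQ_unique)
    show "(\<lambda>n. ip (kernel_comb (rs n)) (kernel_comb (rs n))) \<longlonglongrightarrow> ip G G"
      by (rule ip_self_tendsto[OF g G lim])
    show "(\<lambda>n. ip (kernel_comb (rs n)) (kernel_comb (rs n))) \<longlonglongrightarrow> (\<integral>x. (\<phi> x)\<^sup>2 \<partial>M)"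
      using integral_square_tendsto_of_L2_tendsto[OF step \<phi> conv]
      by (simp add: ip_kernel_comb_kernel_comb[OF rs rs] power2_eq_square)
  qed
  ultimately show ?thesis using that G \<phi> by (simp add: L2_density_iff)
qed

lemma H_has_L2_density:
  assumes "sigma_finite_measure M" and F: "F \<in> H"
  obtains \<phi> where "L2_density M F \<phi>"
proof -
  interpret sigma_finite_measure M by fact
  have bound: "(\<Sum>(c, B)\<leftarrow>r. c * F B)\<^sup>2 \<le> ip F F * (\<integral>x. (step_fun r x)\<^sup>2 \<partial>M)"
    if r: "snd ` set r \<subseteq> fin_sets M" for r
    using ip_Cauchy_Schwarz[OF kernel_comb_in_H[OF r] F] ip_kernel_comb[OF r F]
      ip_kernel_comb_kernel_comb[OF r r]
    by (simp add: power2_eq_square mult.commute)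
  obtain \<phi> where "square_integrable M \<phi>" "\<And>B. B \<in> fin_sets M \<Longrightarrow> F B = (LINT x:B|M. \<phi> x)"
    using step_functional_representation[OF bound ip_nonneg[OF F]] by blast
  then have "L2_density M F \<phi>" by (simp add: L2_density_iff)
  then show ?thesis by (rule that)
qed

lemma ip_self_eq_L2_norm:
  assumes "F \<in> H" and "L2_density M F \<phi>"
  shows "ip F F = (\<integral>x. (\<phi> x)\<^sup>2 \<partial>M)"
proof -
  from assms(2) have "square_integrable M \<phi>" by (simp add: L2_density_iff)
  then obtain G where "G \<in> H" "L2_density M G \<phi>" "ip G G = (\<integral>x. (\<phi> x)\<^sup>2 \<partial>M)"
    by (rule H_element_of_L2)
  with assms H_extensional have "F = G" by (intro L2_density_eq) auto
  with \<open>ip G G = _\<close> show ?thesis by simp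
qed

lemma H_iff_L2_density:
  assumes "sigma_finite_measure M" and F: "F \<in> extensional (fin_sets M)"
  shows "F \<in> H \<longleftrightarrow> (\<exists>\<phi>. L2_density M F \<phi>)"
proof
  assume "F \<in> H"
  then obtain \<phi> where "L2_density M F \<phi>" by (rule H_has_L2_density[OF assms(1)])
  then show "\<exists>\<phi>. L2_density M F \<phi>" by blast
next
  assume "\<exists>\<phi>. L2_density M F \<phi>"
  then obtain \<phi> where \<phi>: "L2_density M F \<phi>" by blast
  then have "square_integrable M \<phi>" by (simp add: L2_density_iff)
  then obtain G where "G \<in> H" "L2_density M G \<phi>" by (rule H_element_of_L2)
  with F \<phi> H_extensional have "F = G" by (intro L2_density_eq) auto
  with \<open>G \<in> H\<close> show "F \<in> H" by simp
qed

lemma H_sums: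
  assumes "sigma_finite_measure M" and "F \<in> H"
    and A: "\<And>i. A i \<in> fin_sets M" "disjoint_family A" "(\<Union>i. A i) \<in> fin_sets M"
  shows "(\<lambda>i. F (A i)) sums F (\<Union>i. A i)"
proof -
  obtain \<phi> where \<phi>: "L2_density M F \<phi>" using H_has_L2_density[OF assms(1,2)] .
  then have "(\<lambda>i. LINT x:A i|M. \<phi> x) sums (LINT x:(\<Union>i. A i)|M. \<phi> x)"
    using A by (intro set_integral_sums set_integrable_square_integrable)
      (auto simp: fin_sets_def L2_density_iff)
  then show ?thesis using A \<phi> by (simp add: L2_density_def)
qed

lemma H_null_set:
  assumes "sigma_finite_measure M" and "F \<in> H" and A: "A \<in> fin_sets M" "emeasure M A = 0"
  shows "F A = 0"
proof -
  obtain \<phi> where "L2_density M F \<phi>" using H_has_L2_density[OF assms(1,2)] .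
  with A show ?thesis
    using set_integral_null_set[of A M \<phi>] by (simp add: L2_density_def fin_sets_def null_sets_def)
qed

end

theorem mainTheorem2:
  fixes M :: "'a measure"
    and H :: "('a set \<Rightarrow> real) set"
    and ip :: "('a set \<Rightarrow> real) \<Rightarrow> ('a set \<Rightarrow> real) \<Rightarrow> real"
  assumes "sigma_finite_measure M"
    and "is_rkhs (fin_sets M) (mu_kernel M) H ip"
  shows "(\<forall>F \<in> extensional (fin_sets M). F \<in> H \<longleftrightarrow> (\<exists>\<phi>. L2_density M F \<phi>)) \<and>
         (\<forall>F \<in> H. \<forall>\<phi> \<psi>. L2_density M F \<phi> \<and> L2_density M F \<psi> \<longrightarrow> (AE x in M. \<phi> x = \<psi> x)) \<and>
         (\<forall>F \<in> H. \<forall>\<phi>. L2_density M F \<phi> \<longrightarrow> sqrt (ip F F) = sqrt (\<integral>x. (\<phi> x)\<^sup>2 \<partial>M)) \<and>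
         (\<forall>F \<in> H. \<forall>A :: nat \<Rightarrow> 'a set. (\<forall>i. A i \<in> fin_sets M) \<and> disjoint_family A \<and>
            (\<Union>i. A i) \<in> fin_sets M \<longrightarrow> (\<lambda>i. F (A i)) sums F (\<Union>i. A i)) \<and>
         (\<forall>F \<in> H. \<forall>A \<in> fin_sets M. emeasure M A = 0 \<longrightarrow> F A = 0)"
proof -
  interpret measure_rkhs M H ip using assms(2) by (simp add: measure_rkhs_def rkhs_def)
  interpret sigma_finite_measure M by (rule assms(1))
  show ?thesis
  proof (intro conjI ballI allI impI)
    show "F \<in> H \<longleftrightarrow> (\<exists>\<phi>. L2_density M F \<phi>)" if "F \<in> extensional (fin_sets M)" for F
      using H_iff_L2_density[OF assms(1) that] .
    show "AE x in M. \<phi> x = \<psi> x" if "F \<in> H" "L2_density M F \<phi> \<and> L2_density M F \<psi>" for F \<phi> \<psi>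
      using that by (intro square_integrable_AE_eq) (auto simp: L2_density_iff)
    show "sqrt (ip F F) = sqrt (\<integral>x. (\<phi> x)\<^sup>2 \<partial>M)" if "F \<in> H" "L2_density M F \<phi>" for F \<phi>
      using ip_self_eq_L2_norm[OF that] by simp
    show "(\<lambda>i. F (A i)) sums F (\<Union>i. A i)"
      if "F \<in> H" "(\<forall>i. A i \<in> fin_sets M) \<and> disjoint_family A \<and> (\<Union>i. A i) \<in> fin_sets M" for F A
      using that by (intro H_sums[OF assms(1)]) auto
    show "F A = 0" if "F \<in> H" "A \<in> fin_sets M" "emeasure M A = 0" for F A
      using H_null_set[OF assms(1) that] .
  qed
qed

end
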